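(* The relation $\le$ on $\mathcal{F}_{\mathrm{ord}}(n)$ is a partial order, and its covering relation is exactly $\lessdot$ (that is, $F'$ is covered by $F$ if and only if $F'$ is obtained from $F$ by operating on one non-leaf vertex of $F$).
   Context: An ordered forest is a finite forest of rooted trees in which the children of each vertex are linearly ordered (left to right) and the trees are linearly ordered (left to right); $\mathcal{F}_{\mathrm{ord}}(n)$ is the set of ordered forests on $n$ vertices up to isomorphism preserving roots, edge orientations and all orderings. Vertices are labeled $1,\dots,n$ by (left-to-right) preorder traversal: trees are traversed left to right, and within a tree each vertex is labeled before its subtrees, which are traversed left to right. Operation on a vertex $v$ of $F$: if $v$ is a leaf, $F$ is unchanged; otherwise let $v'$ be the rightmost child of $v$; delete the edge $v\to v'$, and if $v$ has a parent $w$, attach $v'$ (with its subtree) as a child of $w$ placed immediately to the right of $v$, while if $v$ is a root, the subtree of $v'$ becomes a new tree placed immediately to the right of the tree containing $v$. Define $F'\lessdot F$ if $F'$ is obtained from $F$ by operating on one non-leaf vertex, and $F'\le F$ if there is a sequence $F'=F_1,\dots,F_k=F$ ($k\ge1$) in $\mathcal{F}_{\mathrm{ord}}(n)$ with $F_i\lessdot F_{i+1}$ for all $i$. *)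

theory Defs
  imports Main
begin

text \<open>Up to isomorphism preserving roots,
  edge orientations and all orderings, ordered forests correspond exactly to values of type
  otree list.\<close>
datatype otree = Node "otree list"

fun nverts_t :: "otree \<Rightarrow> nat" and nverts_f :: "otree list \<Rightarrow> nat" where
  "nverts_t (Node cs) = Suc (nverts_f cs)"
| "nverts_f [] = 0"
| "nverts_f (t # ts) = nverts_t t + nverts_f ts"

definition forests :: "nat \<Rightarrow> otree list set" where
  "forests n = {F. nverts_f F = n}"

text \<open>Vertices are indexed 0..n-1 in left-to-right preorder (index i is label i+1).
  children_at i F is the list of child subtrees of vertex i.\<close>
fun children_at :: "nat \<Rightarrow> otree list \<Rightarrow> otree list" where
  "children_at i [] = []"
| "children_at i (Node cs # ts) =
     (if i = 0 then cs
      else if i - 1 < nverts_f cs then children_at (i - 1) cs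
      else children_at (i - 1 - nverts_f cs) ts)"

text \<open>The operation on vertex i: detach the rightmost child and place it immediately to the
  right of the vertex among its siblings (or as a new tree right of the vertex's tree if the
  vertex is a root).\<close>
fun operate :: "nat \<Rightarrow> otree list \<Rightarrow> otree list" where
  "operate i [] = []"
| "operate i (Node cs # ts) =
     (if i = 0 then (if cs = [] then Node cs # ts else Node (butlast cs) # last cs # ts)
      else if i - 1 < nverts_f cs then Node (operate (i - 1) cs) # ts
      else Node cs # operate (i - 1 - nverts_f cs) ts)"

definition covers :: "nat \<Rightarrow> otree list \<Rightarrow> otree list \<Rightarrow> bool" where
  "covers n F' F \<longleftrightarrow> F \<in> forests n \<and> F' \<in> forests n \<and>
     (\<exists>i < n. children_at i F \<noteq> [] \<and> F' = operate i F)"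

definition fle :: "nat \<Rightarrow> otree list \<Rightarrow> otree list \<Rightarrow> bool" where
  "fle n F' F \<longleftrightarrow> F' \<in> forests n \<and> F \<in> forests n \<and> (covers n)\<^sup>*\<^sup>* F' F"

definition fle_rel :: "nat \<Rightarrow> (otree list \<times> otree list) set" where
  "fle_rel n = {(F', F). fle n F' F}"


end

theory Submission
  imports Defs
begin

text \<open>Record for every vertex its number of descendants. Operating on a vertex v strictly
  decreases the count of v, which loses its rightmost subtree, and changes no other count: the
  preorder labelling is unchanged, and the parent of v only splits one child subtree into two
  of the same total size. Hence F' \<le> F implies that every count of F' is at most the
  corresponding count of F, which makes \<le> antisymmetric. Moreover, a step G \<lessdot> F
  is recovered from F and any vertex whose count it decreases. If F' \<lessdot> F operates on v
  and F' < G \<lessdot> F, the vertex operated on by G \<lessdot> F has a smaller count in G,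
  hence in F', than in F, so it is v and G = F'.\<close>

lemma nverts_f_append [simp]: "nverts_f (xs @ ys) = nverts_f xs + nverts_f ys"
  by (induction xs) auto

lemma nverts_t_pos: "nverts_t t > 0"
  by (cases t) auto

lemma nverts_f_butlast:
  "xs \<noteq> [] \<Longrightarrow> nverts_f xs = nverts_f (butlast xs) + nverts_t (last xs)"
  by (metis append_butlast_last_id nverts_f_append nverts_f.simps add_0_right)

lemma children_at_append:
  "children_at k (xs @ ys) =
     (if k < nverts_f xs then children_at k xs else children_at (k - nverts_f xs) ys)"
proof (induction xs arbitrary: k)
  case Nil
  then show ?case by simp
next
  case (Cons t xs)
  then show ?case by (cases t) auto
qed

lemma children_at_Suc_Node: "children_at (Suc k) (Node cs # ts) = children_at k (cs @ ts)"
  by (simp add: children_at_append)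

lemma nverts_f_operate [simp]: "nverts_f (operate i F) = nverts_f F"
  by (induction i F rule: operate.induct) (auto simp: nverts_f_butlast)

lemma children_at_operate_self: "children_at i (operate i F) = butlast (children_at i F)"
  by (induction i F rule: operate.induct) (auto simp: nverts_f_butlast)

definition num_descendants :: "nat \<Rightarrow> otree list \<Rightarrow> nat" where
  "num_descendants j F = nverts_f (children_at j F)"

lemma num_descendants_operate_self:
  assumes "children_at i F \<noteq> []"
  shows "num_descendants i (operate i F) < num_descendants i F"
  using nverts_f_butlast[OF assms] nverts_t_pos[of "last (children_at i F)"]
  by (simp add: num_descendants_def children_at_operate_self)

lemma num_descendants_operate_other:
  "j \<noteq> i \<Longrightarrow> num_descendants j (operate i F) = num_descendants j F"
  unfolding num_descendants_def
proof (induction i F arbitrary: j rule: operate.induct)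
  case (1 i)
  then show ?case by simp
next
  case (2 i cs ts)
  show ?case
  proof (cases "i = 0 \<and> cs \<noteq> []")
    case True
    then obtain k where "j = Suc k" using "2.prems" by (cases j) auto
    moreover have "operate i (Node cs # ts) = Node (butlast cs) # last cs # ts"
      using True by simp
    moreover have "butlast cs @ last cs # ts = cs @ ts"
      using True by (metis append_butlast_last_id append_Cons append_assoc self_append_conv2)
    ultimately show ?thesis
      by (simp only: children_at_Suc_Node)
  next
    case False
    then consider "i = 0" "cs = []" | i' where "i = Suc i'"
      by (cases i) auto
    then show ?thesis
    proof cases
      case 1
      then show ?thesis by simp
    next
      case (2 i')
      with "2.IH" "2.prems" show ?thesis
        by (cases j) (auto simp: children_at_Suc_Node children_at_append)
    qed
  qed
qed

lemma covers_num_descendants_less: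
  assumes "covers n F' F"
  shows "(\<lambda>j. num_descendants j F') < (\<lambda>j. num_descendants j F)"
proof -
  obtain i where "children_at i F \<noteq> []" and F': "F' = operate i F"
    using assms unfolding covers_def by blast
  then have "num_descendants i F' < num_descendants i F"
    using num_descendants_operate_self by blast
  moreover have "num_descendants j F' = num_descendants j F" if "j \<noteq> i" for j
    using that F' num_descendants_operate_other by blast
  ultimately have "num_descendants j F' \<le> num_descendants j F" for j
    by (cases "j = i") simp_all
  then have "(\<lambda>j. num_descendants j F') \<le> (\<lambda>j. num_descendants j F)"
    by (rule le_funI)
  moreover have "\<not> (\<lambda>j. num_descendants j F) \<le> (\<lambda>j. num_descendants j F')"
    using \<open>num_descendants i F' < num_descendants i F\<close> le_funD[of _ _ i] by fastforce
  ultimately show ?thesis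
    unfolding less_fun_def by blast
qed

lemma covers_determined_by_vertex:
  assumes "covers n F' F" and "num_descendants j F' < num_descendants j F"
  shows "F' = operate j F"
proof -
  obtain i where F': "F' = operate i F"
    using assms(1) unfolding covers_def by blast
  have "i = j"
  proof (rule ccontr)
    assume "i \<noteq> j"
    then have "num_descendants j F' = num_descendants j F"
      using F' num_descendants_operate_other by presburger
    with assms(2) show False by simp
  qed
  with F' show ?thesis by simp
qed

lemma covers_rtranclp_forests:
  "(covers n)\<^sup>*\<^sup>* F' F \<Longrightarrow> F' \<in> forests n \<Longrightarrow> F \<in> forests n"
  by (induction rule: rtranclp_induct) (simp_all add: covers_def)

lemma fle_iff_rtranclp_covers:
  "F' \<in> forests n \<Longrightarrow> fle n F' F \<longleftrightarrow> (covers n)\<^sup>*\<^sup>* F' F"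
  unfolding fle_def using covers_rtranclp_forests by blast

lemma rtranclp_strict_mono_le:
  fixes \<phi> :: "'a \<Rightarrow> 'b::order"
  assumes "\<And>x y. r x y \<Longrightarrow> \<phi> x < \<phi> y"
  shows "r\<^sup>*\<^sup>* x y \<Longrightarrow> \<phi> x \<le> \<phi> y"
proof (induction rule: rtranclp_induct)
  case (step y z)
  show ?case
    using order.strict_trans1[OF step.IH assms[OF step.hyps(2)]] by (rule less_imp_le)
qed simp

lemma tranclp_strict_mono_less:
  fixes \<phi> :: "'a \<Rightarrow> 'b::order"
  assumes "\<And>x y. r x y \<Longrightarrow> \<phi> x < \<phi> y"
  shows "r\<^sup>+\<^sup>+ x y \<Longrightarrow> \<phi> x < \<phi> y"
proof (induction rule: tranclp_induct)
  case (base y)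
  then show ?case by (rule assms)
next
  case (step y z)
  show ?case
    by (rule order.strict_trans[OF step.IH assms[OF step.hyps(2)]])
qed

lemma rtranclp_antisym_of_strict_mono:
  fixes \<phi> :: "'a \<Rightarrow> 'b::order"
  assumes "\<And>x y. r x y \<Longrightarrow> \<phi> x < \<phi> y" and "r\<^sup>*\<^sup>* x y" and "r\<^sup>*\<^sup>* y x"
  shows "x = y"
proof (rule ccontr)
  assume "x \<noteq> y"
  with rtranclpD[OF assms(2)] have "r\<^sup>+\<^sup>+ x y"
    by simp
  then have "\<phi> x < \<phi> y"
    using tranclp_strict_mono_less[of r \<phi>] assms(1) by blast
  moreover have "\<phi> y \<le> \<phi> x"
    using rtranclp_strict_mono_le[of r \<phi>] assms(1,3) by blast
  ultimately show False by simp
qed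

lemma covering_of_rtranclp_iff:
  fixes \<phi> :: "'a \<Rightarrow> 'j \<Rightarrow> 'b::order"
  assumes strict: "\<And>x y. r x y \<Longrightarrow> \<phi> x < \<phi> y"
    and determined: "\<And>x y j. r x y \<Longrightarrow> \<phi> x j < \<phi> y j \<Longrightarrow> x = step j y"
  shows "(r\<^sup>*\<^sup>* x y \<and> x \<noteq> y \<and> \<not> (\<exists>z. r\<^sup>*\<^sup>* x z \<and> x \<noteq> z \<and> r\<^sup>*\<^sup>* z y \<and> z \<noteq> y))
    \<longleftrightarrow> r x y"
proof
  assume cover: "r\<^sup>*\<^sup>* x y \<and> x \<noteq> y \<and> \<not> (\<exists>z. r\<^sup>*\<^sup>* x z \<and> x \<noteq> z \<and> r\<^sup>*\<^sup>* z y \<and> z \<noteq> y)"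
  then obtain z where "r x z" and "r\<^sup>*\<^sup>* z y"
    by (blast elim: converse_rtranclpE)
  moreover have "x \<noteq> z"
    using strict[OF \<open>r x z\<close>] by blast
  ultimately show "r x y"
    using cover by blast
next
  assume "r x y"
  have "x = z" if "r\<^sup>*\<^sup>* x z" and "r\<^sup>*\<^sup>* z y" and "z \<noteq> y" for z
  proof -
    obtain w where "r\<^sup>*\<^sup>* z w" and "r w y"
      using \<open>r\<^sup>*\<^sup>* z y\<close> \<open>z \<noteq> y\<close> by (blast elim: rtranclp.cases)
    then have "\<phi> w < \<phi> y"
      using strict by blast
    then obtain j where "\<phi> w j \<le> \<phi> y j" and "\<not> \<phi> y j \<le> \<phi> w j"
      unfolding less_fun_def le_fun_def by blast
    then have "\<phi> w j < \<phi> y j"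
      by (simp add: less_le_not_le)
    moreover have "\<phi> x \<le> \<phi> w"
      using rtranclp_strict_mono_le[of r \<phi>, OF strict rtranclp_trans[OF \<open>r\<^sup>*\<^sup>* x z\<close> \<open>r\<^sup>*\<^sup>* z w\<close>]] .
    ultimately have "\<phi> x j < \<phi> y j"
      by (meson le_funD order.strict_trans1)
    then have "x = w"
      using determined[OF \<open>r x y\<close>] determined[OF \<open>r w y\<close> \<open>\<phi> w j < \<phi> y j\<close>] by simp
    then show "x = z"
      using rtranclp_antisym_of_strict_mono[of r \<phi>, OF strict \<open>r\<^sup>*\<^sup>* x z\<close>] \<open>r\<^sup>*\<^sup>* z w\<close> by simp
  qed
  moreover have "x \<noteq> y"
    using strict[OF \<open>r x y\<close>] by blast
  ultimately show "r\<^sup>*\<^sup>* x y \<and> x \<noteq> y \<and> \<not> (\<exists>z. r\<^sup>*\<^sup>* x z \<and> x \<noteq> z \<and> r\<^sup>*\<^sup>* z y \<and> z \<noteq> y)"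
    using \<open>r x y\<close> by blast
qed

lemma partial_order_on_fle_rel: "partial_order_on (forests n) (fle_rel n)"
proof -
  have "fle_rel n = relation_of (fle n) (forests n)"
    by (auto simp: fle_rel_def relation_of_def fle_def)
  moreover have "F' = F" if "fle n F' F" and "fle n F F'" for F' F
    using that rtranclp_antisym_of_strict_mono[of "covers n" "\<lambda>F j. num_descendants j F"]
      covers_num_descendants_less
    unfolding fle_def by blast
  ultimately show ?thesis
    by (auto simp: fle_def intro: partial_order_on_relation_ofI)
qed

lemma covers_iff_covering_in_fle:
  assumes "F' \<in> forests n"
  shows "(fle n F' F \<and> F' \<noteq> F \<and> \<not> (\<exists>G. fle n F' G \<and> F' \<noteq> G \<and> fle n G F \<and> G \<noteq> F))
    \<longleftrightarrow> covers n F' F"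
proof -
  have "((covers n)\<^sup>*\<^sup>* F' F \<and> F' \<noteq> F \<and>
      \<not> (\<exists>G. (covers n)\<^sup>*\<^sup>* F' G \<and> F' \<noteq> G \<and> (covers n)\<^sup>*\<^sup>* G F \<and> G \<noteq> F))
    \<longleftrightarrow> covers n F' F"
    using covers_num_descendants_less covers_determined_by_vertex
    by (rule covering_of_rtranclp_iff[where \<phi> = "\<lambda>F j. num_descendants j F" and step = operate])
  moreover have "fle n F' G \<and> fle n G F \<longleftrightarrow> (covers n)\<^sup>*\<^sup>* F' G \<and> (covers n)\<^sup>*\<^sup>* G F" for G
    using assms fle_iff_rtranclp_covers covers_rtranclp_forests by blast
  ultimately show ?thesis
    using fle_iff_rtranclp_covers[OF assms] by blast
qed

theorem theorem4p6:
  fixes n :: nat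
  shows "partial_order_on (forests n) (fle_rel n) \<and>
    (\<forall>F' \<in> forests n. \<forall>F \<in> forests n.
       ((fle n F' F \<and> F' \<noteq> F \<and>
         \<not> (\<exists>G. fle n F' G \<and> F' \<noteq> G \<and> fle n G F \<and> G \<noteq> F))
        \<longleftrightarrow> covers n F' F))"
  using partial_order_on_fle_rel covers_iff_covering_in_fle by blast

end
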